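(* Let $(X,J)$ be the compact almost-complex manifold described in the context. Then $h^{1,0}_{\mathrm{Dol}}=1$ (spanned by $\Phi^1$), $h^{2,0}_{\mathrm{Dol}}=0$, $h^{3,0}_{\mathrm{Dol}}=0$.
   Context: General notions. For an almost-complex manifold $(X,J)$, $A^k(X)=\bigoplus_{p+q=k}A^{p,q}(X)$ and $d=\mu+\partial+\overline{\partial}+\bar\mu$ with $\mu:A^{p,q}\to A^{p+2,q-1}$, $\partial:A^{p,q}\to A^{p+1,q}$, $\overline{\partial}:A^{p,q}\to A^{p,q+1}$, $\bar\mu:A^{p,q}\to A^{p-1,q+2}$. The almost-complex Dolbeault cohomology (of Cirici–Wilson) in bidegree $(p,0)$ is $H^{p,0}_{\mathrm{Dol}}(X)=\{\psi\in A^{p,0}(X):\overline{\partial}\psi=0,\ \bar\mu\psi=0\}$, and $h^{p,0}_{\mathrm{Dol}}$ is its complex dimension. The manifold. Let $G$ be the Lie group $\mathbb{R}^2\ltimes_\Phi\mathbb{R}^4$ with coordinates $(t,x,y_1,y_2,z_1,z_2)$ and product $(t,x,y_1,y_2,z_1,z_2)*(t',x',y_1',y_2',z_1',z_2')=(t+t',x+x',y_1'e^t+xz_1'e^t+y_1,\,y_2'e^{-t}+xz_2'e^{-t}+y_2,\,z_1'e^t+z_1,\,z_2'e^{-t}+z_2)$. Let $B\in SL(2,\mathbb{Z})$ have distinct eigenvalues $e^{a_0},e^{-a_0}$ ($a_0>0$) and $P$ real invertible with $PBP^{-1}=\mathrm{diag}(e^{a_0},e^{-a_0})$. Let $\Gamma$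 be the lattice of elements with $t\in a_0\mathbb{Z}$, $x\in\mathbb{Z}$, $(y_1,y_2)=(m_1,m_2)P^t$, $(z_1,z_2)=(n_1,n_2)P^t$, $m_i,n_i\in\mathbb{Z}$, and $X=\Gamma\backslash G$. Left-invariant $1$-forms: $e^1=dt$, $e^2=dx$, $e^3=e^{-t}dy_1-xe^{-t}dz_1$, $e^4=e^{t}dy_2-xe^{t}dz_2$, $e^5=e^{-t}dz_1$, $e^6=e^tdz_2$, with $de^1=de^2=0$, $de^3=-e^{13}-e^{25}$, $de^4=e^{14}-e^{26}$, $de^5=-e^{15}$, $de^6=e^{16}$. The structure. $J$ is the almost-complex structure on $X$ whose $(1,0)$-forms are spanned by $\Phi^1=e^1+ie^2$, $\Phi^2=e^3+ie^4$, $\Phi^3=e^5+ie^6$. *)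

theory Defs
  imports "HOL-Analysis.Analysis" "HOL-Library.Function_Algebras"
begin

section \<open>The Lie group G = R^2 \<ltimes> R^4 in coordinates (t,x,y1,y2,z1,z2)\<close>

type_synonym pt = "real \<times> real \<times> real \<times> real \<times> real \<times> real"

definition gmul :: "pt \<Rightarrow> pt \<Rightarrow> pt" where
  "gmul = (\<lambda>(t,x,y1,y2,z1,z2) (t',x',y1',y2',z1',z2').
     (t + t', x + x', y1' * exp t + x * z1' * exp t + y1,
      y2' * exp (- t) + x * z2' * exp (- t) + y2,
      z1' * exp t + z1, z2' * exp (- t) + z2))"

definition Gamma :: "real \<Rightarrow> real \<Rightarrow> real \<Rightarrow> real \<Rightarrow> real \<Rightarrow> pt set" where
  "Gamma a0 p11 p12 p21 p22 = {(t,x,y1,y2,z1,z2). \<exists>k l m1 m2 n1 n2 :: int.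
      t = a0 * of_int k \<and> x = of_int l \<and>
      y1 = of_int m1 * p11 + of_int m2 * p12 \<and> y2 = of_int m1 * p21 + of_int m2 * p22 \<and>
      z1 = of_int n1 * p11 + of_int n2 * p12 \<and> z2 = of_int n1 * p21 + of_int n2 * p22}"

text \<open>Functions on X = Gamma\G are left-Gamma-invariant functions on G.\<close>
definition Gamma_inv :: "pt set \<Rightarrow> (pt \<Rightarrow> complex) \<Rightarrow> bool" where
  "Gamma_inv \<Gamma> f \<longleftrightarrow> (\<forall>\<gamma>\<in>\<Gamma>. \<forall>g. f (gmul \<gamma> g) = f g)"

definition pdiff :: "pt \<Rightarrow> (pt \<Rightarrow> complex) \<Rightarrow> pt \<Rightarrow> complex" where
  "pdiff v f x = frechet_derivative f (at x) v"

fun iterpd :: "pt list \<Rightarrow> (pt \<Rightarrow> complex) \<Rightarrow> pt \<Rightarrow> complex" where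
  "iterpd [] f = f"
| "iterpd (v # vs) f = pdiff v (iterpd vs f)"

definition smoothfun :: "(pt \<Rightarrow> complex) \<Rightarrow> bool" where
  "smoothfun f \<longleftrightarrow> (\<forall>vs. set vs \<subseteq> Basis \<longrightarrow> (\<forall>x. iterpd vs f differentiable (at x)))"

text \<open>Coordinate unit vectors at the identity (0 is the identity of G); the
  left-invariant coframe e^1..e^6 equals dt,dx,dy1,dy2,dz1,dz2 at the identity,
  so its dual frame is E_k f (g) = d/ds f(g * s u_k) at s = 0.\<close>
definition uvec :: "nat \<Rightarrow> pt" where
  "uvec k = (if k = 1 then 1 else 0, if k = 2 then 1 else 0, if k = 3 then 1 else 0,
             if k = 4 then 1 else 0, if k = 5 then 1 else 0, if k = 6 then 1 else 0)"

definition Efield :: "nat \<Rightarrow> (pt \<Rightarrow> complex) \<Rightarrow> pt \<Rightarrow> complex" where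
  "Efield k f g = vector_derivative (\<lambda>s::real. f (gmul g (s *\<^sub>R uvec k))) (at 0)"

text \<open>A form is given by its coefficient functions: alpha I is the coefficient of
  the monomial Phi^I (wedge in increasing order), where I is a subset of {0..5};
  indices 0,1,2 stand for Phi^1,Phi^2,Phi^3 and 3,4,5 for their conjugates.\<close>
type_synonym form = "nat set \<Rightarrow> pt \<Rightarrow> complex"

definition fzero :: form where "fzero = (\<lambda>I x. 0)"
definition fadd :: "form \<Rightarrow> form \<Rightarrow> form" where "fadd a b = (\<lambda>I x. a I x + b I x)"
definition fsc :: "complex \<Rightarrow> form \<Rightarrow> form" where "fsc c a = (\<lambda>I x. c * a I x)"

definition one :: "nat \<Rightarrow> form" where "one i = (\<lambda>I x. if I = {i} then 1 else 0)"

definition wsgn :: "nat set \<Rightarrow> nat set \<Rightarrow> complex" where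
  "wsgn I J = (-1) ^ card {(i,j). i \<in> I \<and> j \<in> J \<and> j < i}"

definition wedge :: "form \<Rightarrow> form \<Rightarrow> form" where
  "wedge a b = (\<lambda>K x. \<Sum>I\<in>Pow K. wsgn I (K - I) * a I x * b (K - I) x)"

text \<open>Real coframe e^1..e^6 expressed in the complex frame:
  e^{2j-1} = (Phi^j + conj Phi^j)/2, e^{2j} = (Phi^j - conj Phi^j)/(2i).\<close>
definition ereal :: "nat \<Rightarrow> form" where
  "ereal k = (let j = (k + 1) div 2 in
     if odd k then fsc (1/2) (fadd (one (j - 1)) (one (j + 2)))
     else fsc (1 / (2 * \<i>)) (fadd (one (j - 1)) (fsc (-1) (one (j + 2)))))"

definition de :: "nat \<Rightarrow> form" where
  "de k = (if k = 3 then fadd (fsc (-1) (wedge (ereal 1) (ereal 3))) (fsc (-1) (wedge (ereal 2) (ereal 5)))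
     else if k = 4 then fadd (wedge (ereal 1) (ereal 4)) (fsc (-1) (wedge (ereal 2) (ereal 6)))
     else if k = 5 then fsc (-1) (wedge (ereal 1) (ereal 5))
     else if k = 6 then wedge (ereal 1) (ereal 6)
     else fzero)"

text \<open>d Phi^j = de^{2j-1} + i de^{2j}, d conj Phi^j = de^{2j-1} - i de^{2j}.\<close>
definition dPhi :: "nat \<Rightarrow> form" where
  "dPhi i = (if i < 3 then fadd (de (2 * i + 1)) (fsc \<i> (de (2 * i + 2)))
             else fadd (de (2 * (i - 3) + 1)) (fsc (- \<i>) (de (2 * (i - 3) + 2))))"

fun monolist :: "nat list \<Rightarrow> form" where
  "monolist [] = (\<lambda>I x. if I = {} then 1 else 0)"
| "monolist (i # is) = wedge (one i) (monolist is)"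

text \<open>Leibniz rule for d of a monomial.\<close>
fun dlist :: "nat list \<Rightarrow> form" where
  "dlist [] = fzero"
| "dlist (i # is) = fadd (wedge (dPhi i) (monolist is)) (fsc (-1) (wedge (one i) (dlist is)))"

definition mono :: "nat set \<Rightarrow> form" where "mono I = monolist (sorted_list_of_set I)"
definition dmono :: "nat set \<Rightarrow> form" where "dmono I = dlist (sorted_list_of_set I)"

definition dfun :: "(pt \<Rightarrow> complex) \<Rightarrow> form" where
  "dfun f = (\<lambda>K x. \<Sum>k\<in>{1..6}. Efield k f x * ereal k K x)"

definition dform :: "form \<Rightarrow> form" where
  "dform a = (\<lambda>K x. \<Sum>I\<in>Pow {0..5}. wedge (dfun (a I)) (mono I) K x + a I x * dmono I K x)"

definition bideg :: "nat \<Rightarrow> nat \<Rightarrow> nat set \<Rightarrow> bool" where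
  "bideg p q I \<longleftrightarrow> I \<subseteq> {0..5} \<and> card (I \<inter> {0,1,2}) = p \<and> card (I \<inter> {3,4,5}) = q"

definition proj :: "nat \<Rightarrow> nat \<Rightarrow> form \<Rightarrow> form" where
  "proj p q a = (\<lambda>I x. if bideg p q I then a I x else 0)"

definition Apq :: "pt set \<Rightarrow> nat \<Rightarrow> nat \<Rightarrow> form set" where
  "Apq \<Gamma> p q = {a. (\<forall>I. \<not> bideg p q I \<longrightarrow> a I = (\<lambda>x. 0)) \<and>
                     (\<forall>I. smoothfun (a I) \<and> Gamma_inv \<Gamma> (a I))}"

definition dbar :: "nat \<Rightarrow> form \<Rightarrow> form" where "dbar p a = proj p 1 (dform a)"
definition mubar :: "nat \<Rightarrow> form \<Rightarrow> form" where "mubar p a = proj (p - 1) 2 (dform a)"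

definition HDol_p0 :: "pt set \<Rightarrow> nat \<Rightarrow> form set" where
  "HDol_p0 \<Gamma> p = {a \<in> Apq \<Gamma> p 0. dbar p a = fzero \<and> mubar p a = fzero}"

definition hDol_p0 :: "pt set \<Rightarrow> nat \<Rightarrow> nat" where
  "hDol_p0 \<Gamma> p = vector_space.dim fsc (HDol_p0 \<Gamma> p)"

definition Phi1 :: form where "Phi1 = one 0"

end

theory Submission
  imports Defs "HOL-Complex_Analysis.Cauchy_Integral_Formula"
begin

text \<open>
  Since \<open>d\<Phi>\<^sup>1 = 0\<close>, \<open>mubar \<Phi>\<^sup>2 = -(conj \<Phi>\<^sup>1 \<wedge> conj \<Phi>\<^sup>2)/2\<close> and
  \<open>mubar \<Phi>\<^sup>3 = -(conj \<Phi>\<^sup>1 \<wedge> conj \<Phi>\<^sup>3)/2\<close>, the zeroth-order operator \<open>mubar\<close> is injective on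
  \<open>(2,0)\<close>- and \<open>(3,0)\<close>-forms and on the span of \<open>\<Phi>\<^sup>2, \<Phi>\<^sup>3\<close>. So \<open>mubar \<psi> = 0\<close> leaves only
  \<open>\<psi> = f \<Phi>\<^sup>1\<close>, and then \<open>dbar \<psi> = 0\<close> means \<open>(E\<^sub>2\<^sub>k\<^sub>-\<^sub>1 + i E\<^sub>2\<^sub>k) f = 0\<close> for \<open>k = 1, 2, 3\<close>:
  \<open>f\<close> is holomorphic on the three families of planes spanned by \<open>(E\<^sub>1,E\<^sub>2)\<close>, \<open>(E\<^sub>3,E\<^sub>4)\<close>,
  \<open>(E\<^sub>5,E\<^sub>6)\<close>. On each such plane \<open>f\<close> is periodic under a rank-two lattice coming from
  \<open>\<Gamma>\<close>, hence bounded and constant by Liouville's theorem. Moving successively in \<open>y\<close>,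
  in \<open>z\<close> and in \<open>(t,x)\<close> shows that \<open>f\<close> is constant.
\<close>

section \<open>Exterior algebra in the frame \<open>\<Phi>\<close>\<close>

lemma fadd_apply [simp]: "fadd a b K x = a K x + b K x" by (simp add: fadd_def)
lemma fsc_apply [simp]: "fsc c a K x = c * a K x" by (simp add: fsc_def)
lemma fzero_apply [simp]: "fzero K x = 0" by (simp add: fzero_def)
lemma one_apply [simp]: "one i K x = (if K = {i} then 1 else 0)" by (simp add: one_def)

lemma wedge_one_left [simp]:
  assumes "finite K"
  shows "wedge (one i) b K x = (if i \<in> K then (-1) ^ card (K \<inter> {..<i}) * b (K - {i}) x else 0)"
proof -
  have "{(a,j). a \<in> {i} \<and> j \<in> K - {i} \<and> j < a} = (\<lambda>j. (i,j)) ` (K \<inter> {..<i})" by auto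
  then have sgn: "wsgn {i} (K - {i}) = (-1) ^ card (K \<inter> {..<i})"
    unfolding wsgn_def by (simp add: card_image inj_on_def)
  have "wedge (one i) b K x = (\<Sum>I\<in>Pow K. if I = {i} then wsgn {i} (K - {i}) * b (K - {i}) x else 0)"
    unfolding wedge_def one_def by (rule sum.cong) auto
  then show ?thesis using assms sgn by (simp add: sum.delta)
qed

lemma wedge_one_right [simp]:
  assumes "finite K"
  shows "wedge a (one j) K x = (if j \<in> K then (-1) ^ card (K \<inter> {j<..}) * a (K - {j}) x else 0)"
proof -
  have "{(a,b). a \<in> K - {j} \<and> b \<in> {j} \<and> b < a} = (\<lambda>a. (a,j)) ` (K \<inter> {j<..})" by auto
  then have sgn: "wsgn (K - {j}) {j} = (-1) ^ card (K \<inter> {j<..})"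
    unfolding wsgn_def by (simp add: card_image inj_on_def)
  have "wedge a (one j) K x
      = (\<Sum>I\<in>Pow K. if I = K - {j} then (if j \<in> K then wsgn (K - {j}) {j} * a (K - {j}) x else 0) else 0)"
    unfolding wedge_def one_def by (rule sum.cong) auto
  then show ?thesis using assms sgn by (simp add: sum.delta)
qed

lemma wedge_unit_right [simp]:
  assumes "finite K"
  shows "wedge a (\<lambda>I x. if I = {} then 1 else 0) K x = a K x"
proof -
  have "wedge a (\<lambda>I x. if I = {} then 1 else 0) K x = (\<Sum>I\<in>Pow K. if I = K then wsgn K {} * a K x else 0)"
    unfolding wedge_def by (rule sum.cong) auto
  then show ?thesis using assms by (simp add: sum.delta wsgn_def)
qed

lemma wedge_fadd_left [simp]: "wedge (fadd a b) c K x = wedge a c K x + wedge b c K x"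
  unfolding wedge_def by (simp add: sum.distrib[symmetric] algebra_simps)
lemma wedge_fadd_right [simp]: "wedge c (fadd a b) K x = wedge c a K x + wedge c b K x"
  unfolding wedge_def by (simp add: sum.distrib[symmetric] algebra_simps)
lemma wedge_fsc_left [simp]: "wedge (fsc k a) c K x = k * wedge a c K x"
  unfolding wedge_def by (simp add: sum_distrib_left algebra_simps)
lemma wedge_fsc_right [simp]: "wedge c (fsc k a) K x = k * wedge c a K x"
  unfolding wedge_def by (simp add: sum_distrib_left algebra_simps)
lemma wedge_fzero_left [simp]: "wedge fzero c K x = 0"
  unfolding wedge_def by simp
lemma wedge_fzero_right [simp]: "wedge c fzero K x = 0"
  unfolding wedge_def by simp

lemma monolist_support: "monolist is J x \<noteq> 0 \<Longrightarrow> J = set is"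
proof (induction "is" arbitrary: J)
  case Nil then show ?case by (auto split: if_splits)
next
  case (Cons i "is")
  have "finite J"
  proof (rule ccontr)
    assume "infinite J"
    then have "monolist (i # is) J x = 0" by (simp add: wedge_def)
    with Cons.prems show False by simp
  qed
  with Cons.prems have "i \<in> J" "monolist is (J - {i}) x \<noteq> 0"
    by (auto split: if_splits)
  with Cons.IH[of "J - {i}"] show ?case by auto
qed

lemma wedge_mono_eq_0:
  assumes "finite I" "\<not> I \<subseteq> K"
  shows "wedge a (mono I) K x = 0"
  unfolding wedge_def
proof (rule sum.neutral, intro ballI)
  fix J assume "J \<in> Pow K"
  with assms have "mono I (K - J) x = 0"
    using monolist_support[of "sorted_list_of_set I" "K - J" x] by (auto simp: mono_def)
  then show "wsgn J (K - J) * a J x * mono I (K - J) x = 0" by simp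
qed

lemma wedge_one_unit [simp]: "wedge (one i) (\<lambda>I x. if I = {} then 1 else 0) = one i"
proof (intro ext)
  fix K x show "wedge (one i) (\<lambda>I x. if I = {} then 1 else 0) K x = one i K x"
  proof (cases "finite K")
    case True then show ?thesis by auto
  next
    case False then show ?thesis by (auto simp: wedge_def)
  qed
qed

lemma mono_singleton: "mono {i} = one i"
  by (simp add: mono_def)

lemmas structure_equations = dmono_def dPhi_def de_def ereal_def Let_def insert_Diff_if

lemma dfun_const: "dfun (\<lambda>x. k) = fzero"
  by (simp add: dfun_def Efield_def fzero_def fun_eq_iff)

lemma dfun_expand:
  "dfun f K x = Efield 1 f x * ereal 1 K x + Efield 2 f x * ereal 2 K x + Efield 3 f x * ereal 3 K x
    + Efield 4 f x * ereal 4 K x + Efield 5 f x * ereal 5 K x + Efield 6 f x * ereal 6 K x"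
proof -
  have "{1..6::nat} = {1,2,3,4,5,6}" by auto
  then show ?thesis unfolding dfun_def by (simp add: algebra_simps)
qed

section \<open>Consequences of \<open>dbar \<psi> = 0\<close> and \<open>mubar \<psi> = 0\<close> for \<open>(p,0)\<close>-forms\<close>

lemma bideg_p0_iff: "bideg p 0 I \<longleftrightarrow> I \<subseteq> {0,1,2} \<and> card I = p"
proof
  assume h: "bideg p 0 I"
  then have "finite I" unfolding bideg_def by (auto intro: finite_subset)
  with h have "I \<inter> {3,4,5} = {}" "I \<subseteq> {0..5}" unfolding bideg_def by auto
  moreover have "{0..5::nat} = {0,1,2} \<union> {3,4,5}" by auto
  ultimately have "I \<subseteq> {0,1,2}" by blast
  with h show "I \<subseteq> {0,1,2} \<and> card I = p" unfolding bideg_def by (simp add: Int_absorb2)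
next
  assume "I \<subseteq> {0,1,2} \<and> card I = p"
  moreover have "I \<inter> {0,1,2} = I" "I \<inter> {3,4,5} = {}" using calculation by auto
  ultimately show "bideg p 0 I" unfolding bideg_def by auto
qed

lemma subsets_012_card_1: "{I. I \<subseteq> {0,1,2::nat} \<and> card I = 1} = {{0},{1},{2}}"
  by (auto simp: card_1_singleton_iff)

lemma subsets_012_card_2: "{I. I \<subseteq> {0,1,2::nat} \<and> card I = 2} = {{0,1},{0,2},{1,2}}"
proof -
  have "I = {0,1} \<or> I = {0,2} \<or> I = {1,2}" if "I \<subseteq> {0,1,2::nat}" "card I = 2" for I
  proof -
    obtain u v where "I = {u,v}" "u \<noteq> v" using \<open>card I = 2\<close> by (auto simp: card_2_iff)
    with that show ?thesis by (auto simp: insert_commute)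
  qed
  then show ?thesis by auto
qed

lemma subsets_012_card_3: "{I. I \<subseteq> {0,1,2::nat} \<and> card I = 3} = {{0,1,2}}"
proof -
  have "I \<subseteq> {0,1,2::nat} \<and> card I = 3 \<longleftrightarrow> I = {0,1,2}" for I
    using card_subset_eq[of "{0,1,2::nat}" I] by auto
  then show ?thesis by auto
qed

lemma dform_of_p0_form:
  assumes "a \<in> Apq \<Gamma> p 0"
  shows "dform a K x = (\<Sum>I\<in>{I. I \<subseteq> {0,1,2::nat} \<and> card I = p}.
            wedge (dfun (a I)) (mono I) K x + a I x * dmono I K x)"
  unfolding dform_def
proof (rule sum.mono_neutral_right)
  show "\<forall>I\<in>Pow {0..5} - {I. I \<subseteq> {0,1,2::nat} \<and> card I = p}.
      wedge (dfun (a I)) (mono I) K x + a I x * dmono I K x = 0"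
    using assms by (auto simp: Apq_def bideg_p0_iff dfun_const)
qed auto

lemma HDol_p0_dform_eq_0:
  assumes "a \<in> HDol_p0 \<Gamma> p"
  shows "bideg p 1 K \<Longrightarrow> dform a K x = 0" and "bideg (p - 1) 2 K \<Longrightarrow> dform a K x = 0"
proof -
  from assms have "dbar p a K x = fzero K x" "mubar p a K x = fzero K x"
    by (simp_all add: HDol_p0_def)
  then show "bideg p 1 K \<Longrightarrow> dform a K x = 0" "bideg (p - 1) 2 K \<Longrightarrow> dform a K x = 0"
    by (simp_all add: dbar_def mubar_def proj_def)
qed

lemma HDol_p0_coeff_eq_0:
  assumes "a \<in> HDol_p0 \<Gamma> p" "\<not> bideg p 0 I"
  shows "a I x = 0"
  using assms by (auto simp: HDol_p0_def Apq_def)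

lemma HDol_p0_2_trivial: "HDol_p0 \<Gamma> 2 \<subseteq> {fzero}"
proof
  fix a assume a: "a \<in> HDol_p0 \<Gamma> 2"
  then have "a \<in> Apq \<Gamma> 2 0" by (simp add: HDol_p0_def)
  from dform_of_p0_form[OF this, unfolded subsets_012_card_2] have d: "dform a K x =
      wedge (dfun (a {0,1})) (mono {0,1}) K x + a {0,1} x * dmono {0,1} K x
    + (wedge (dfun (a {0,2})) (mono {0,2}) K x + a {0,2} x * dmono {0,2} K x)
    + (wedge (dfun (a {1,2})) (mono {1,2}) K x + a {1,2} x * dmono {1,2} K x)" for K x
    by (simp add: doubleton_eq_iff algebra_simps)
  have mubar: "dform a {0,3,4} x = 0" "dform a {0,3,5} x = 0" "dform a {2,3,4} x = 0" for x
    using HDol_p0_dform_eq_0(2)[OF a] by (simp_all add: bideg_def)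
  have 01: "a {0,1} x = 0" for x
    using mubar(1)[of x] by (simp add: d wedge_mono_eq_0 structure_equations)
  have 02: "a {0,2} x = 0" for x
    using mubar(2)[of x] by (simp add: d wedge_mono_eq_0 structure_equations 01)
  have 12: "a {1,2} x = 0" for x
    using mubar(3)[of x] by (simp add: d wedge_mono_eq_0 structure_equations 01 02)
  have "a I x = 0" for I x
  proof (cases "bideg 2 0 I")
    case True
    then have "I \<in> {I. I \<subseteq> {0,1,2::nat} \<and> card I = 2}" by (simp add: bideg_p0_iff)
    then have "I = {0,1} \<or> I = {0,2} \<or> I = {1,2}" unfolding subsets_012_card_2 by simp
    with 01 02 12 show ?thesis by (elim disjE) simp_all
  next
    case False with a show ?thesis by (rule HDol_p0_coeff_eq_0)
  qed
  then show "a \<in> {fzero}" by (auto simp: fzero_def fun_eq_iff)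
qed

lemma HDol_p0_3_trivial: "HDol_p0 \<Gamma> 3 \<subseteq> {fzero}"
proof
  fix a assume a: "a \<in> HDol_p0 \<Gamma> 3"
  then have "a \<in> Apq \<Gamma> 3 0" by (simp add: HDol_p0_def)
  from dform_of_p0_form[OF this, unfolded subsets_012_card_3]
  have d: "dform a K x = wedge (dfun (a {0,1,2})) (mono {0,1,2}) K x + a {0,1,2} x * dmono {0,1,2} K x"
    for K x by simp
  have "dform a {0,2,3,4} x = 0" for x
    using HDol_p0_dform_eq_0(2)[OF a] by (simp add: bideg_def)
  then have 012: "a {0,1,2} x = 0" for x
    by (simp add: d wedge_mono_eq_0 structure_equations)
  have "a I x = 0" for I x
  proof (cases "bideg 3 0 I")
    case True
    then have "I \<in> {I. I \<subseteq> {0,1,2::nat} \<and> card I = 3}" by (simp add: bideg_p0_iff)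
    then have "I = {0,1,2}" unfolding subsets_012_card_3 by simp
    with 012 show ?thesis by simp
  next
    case False with a show ?thesis by (rule HDol_p0_coeff_eq_0)
  qed
  then show "a \<in> {fzero}" by (auto simp: fzero_def fun_eq_iff)
qed

lemma HDol_p0_1_equations:
  assumes a: "a \<in> HDol_p0 \<Gamma> 1"
  shows "a {1} x = 0" and "a {2} x = 0"
    and "Efield 1 (a {0}) g + \<i> * Efield 2 (a {0}) g = 0"
    and "Efield 3 (a {0}) g + \<i> * Efield 4 (a {0}) g = 0"
    and "Efield 5 (a {0}) g + \<i> * Efield 6 (a {0}) g = 0"
proof -
  have "a \<in> Apq \<Gamma> 1 0" using a by (simp add: HDol_p0_def)
  from dform_of_p0_form[OF this, unfolded subsets_012_card_1] have d: "dform a K x =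
      wedge (dfun (a {0})) (one 0) K x + a {0} x * dmono {0} K x
    + (wedge (dfun (a {1})) (one 1) K x + a {1} x * dmono {1} K x)
    + (wedge (dfun (a {2})) (one 2) K x + a {2} x * dmono {2} K x)" for K x
    by (simp add: algebra_simps mono_singleton)
  have mubar: "dform a {3,4} x = 0" "dform a {3,5} x = 0" for x
    using HDol_p0_dform_eq_0(2)[OF a] by (simp_all add: bideg_def)
  have dbar: "dform a {0,3} x = 0" "dform a {0,4} x = 0" "dform a {0,5} x = 0" for x
    using HDol_p0_dform_eq_0(1)[OF a] by (simp_all add: bideg_def)
  show a1: "a {1} x = 0" for x
    using mubar(1)[of x] by (simp add: d structure_equations)
  then have a1': "a {Suc 0} x = 0" for x by simp
  show a2: "a {2} x = 0" for x
    using mubar(2)[of x] by (simp add: d structure_equations a1')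
  have sum_eq_0: "- u = v * \<i> \<Longrightarrow> u + \<i> * v = 0" for u v :: complex
    by (metis mult.commute neg_eq_iff_add_eq_0)
  show "Efield 1 (a {0}) g + \<i> * Efield 2 (a {0}) g = 0"
    using dbar(1)[of g] by (intro sum_eq_0) (simp add: d structure_equations a1' a2 dfun_expand)
  show "Efield 3 (a {0}) g + \<i> * Efield 4 (a {0}) g = 0"
    using dbar(2)[of g] by (intro sum_eq_0) (simp add: d structure_equations a1' a2 dfun_expand)
  show "Efield 5 (a {0}) g + \<i> * Efield 6 (a {0}) g = 0"
    using dbar(3)[of g] by (intro sum_eq_0) (simp add: d structure_equations a1' a2 dfun_expand)
qed

section \<open>Doubly periodic holomorphic functions\<close>

lemma entire_doubly_periodic_constant:
  fixes f :: "complex \<Rightarrow> complex" and \<omega>1 \<omega>2 :: complex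
  assumes hol: "f holomorphic_on UNIV"
    and indep: "Im (cnj \<omega>1 * \<omega>2) \<noteq> 0"
    and per: "\<And>(m1::int) (m2::int) w. f (w + of_int m1 * \<omega>1 + of_int m2 * \<omega>2) = f w"
  shows "f w = f 0"
proof -
  define d where "d = Im (cnj \<omega>1 * \<omega>2)"
  define cell where "cell = (\<lambda>s::real \<times> real. fst s *\<^sub>R \<omega>1 + snd s *\<^sub>R \<omega>2) ` cbox (0,0) (1,1)"
  have "compact (f ` cell)"
    unfolding cell_def
    by (intro compact_continuous_image compact_cbox continuous_intros
        continuous_on_subset[OF holomorphic_on_imp_continuous_on[OF hol]]) auto
  moreover have "range f \<subseteq> f ` cell"
  proof
    fix z assume "z \<in> range f"
    then obtain w where z: "z = f w" by blast
    define c1 where "c1 = Im (cnj w * \<omega>2) / d"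
    define c2 where "c2 = Im (cnj \<omega>1 * w) / d"
    have dw: "d *\<^sub>R w = Im (cnj w * \<omega>2) *\<^sub>R \<omega>1 + Im (cnj \<omega>1 * w) *\<^sub>R \<omega>2"
      by (simp add: d_def complex_eq_iff algebra_simps)
    have "w = inverse d *\<^sub>R (d *\<^sub>R w)"
      using indep by (simp add: d_def)
    also have "\<dots> = c1 *\<^sub>R \<omega>1 + c2 *\<^sub>R \<omega>2"
      unfolding dw by (simp add: c1_def c2_def scaleR_add_right divide_inverse_commute)
    finally have "w = c1 *\<^sub>R \<omega>1 + c2 *\<^sub>R \<omega>2" .
    then have "w = (frac c1 *\<^sub>R \<omega>1 + frac c2 *\<^sub>R \<omega>2) + of_int \<lfloor>c1\<rfloor> * \<omega>1 + of_int \<lfloor>c2\<rfloor> * \<omega>2"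
      by (simp add: frac_def scaleR_conv_of_real algebra_simps)
    then have "z = f (frac c1 *\<^sub>R \<omega>1 + frac c2 *\<^sub>R \<omega>2)"
      using z per by metis
    moreover have "(frac c1, frac c2) \<in> cbox (0,0) (1,1)"
      by (simp add: cbox_Pair_eq less_imp_le[OF frac_lt_1])
    ultimately show "z \<in> f ` cell" unfolding cell_def by force
  qed
  ultimately have "bounded (range f)"
    using compact_imp_bounded bounded_subset by blast
  then show ?thesis
    using Liouville_theorem[OF hol] by (metis constant_on_def UNIV_I)
qed

lemma holomorphic_on_plane:
  fixes f :: "'a::real_normed_vector \<Rightarrow> complex" and p u v :: 'a
  assumes diff: "\<And>q. f differentiable (at q)"
    and CR: "\<And>w. frechet_derivative f (at (p + Re w *\<^sub>R u + Im w *\<^sub>R v)) u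
              + \<i> * frechet_derivative f (at (p + Re w *\<^sub>R u + Im w *\<^sub>R v)) v = 0"
  shows "(\<lambda>w. f (p + Re w *\<^sub>R u + Im w *\<^sub>R v)) holomorphic_on UNIV"
proof -
  have "((\<lambda>w. f (p + Re w *\<^sub>R u + Im w *\<^sub>R v)) has_field_derivative
          frechet_derivative f (at (p + Re w *\<^sub>R u + Im w *\<^sub>R v)) u) (at w)" for w
  proof -
    let ?A = "\<lambda>w. p + Re w *\<^sub>R u + Im w *\<^sub>R v"
    let ?D = "frechet_derivative f (at (?A w))"
    have fD: "(f has_derivative ?D) (at (?A w))" using diff frechet_derivative_works by blast
    have A: "(?A has_derivative (\<lambda>h. Re h *\<^sub>R u + Im h *\<^sub>R v)) (at w)"
      by (auto intro!: derivative_eq_intros)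
    have "((f \<circ> ?A) has_derivative (?D \<circ> (\<lambda>h. Re h *\<^sub>R u + Im h *\<^sub>R v))) (at w)"
      by (rule diff_chain_at[OF A fD])
    moreover have "?D \<circ> (\<lambda>h. Re h *\<^sub>R u + Im h *\<^sub>R v) = (\<lambda>h. ?D u * h)"
    proof
      fix h
      have Dv: "?D v = \<i> * ?D u"
        using arg_cong[OF CR[of w], of "\<lambda>z. \<i> * z"] by (simp add: algebra_simps)
      have "(?D \<circ> (\<lambda>h. Re h *\<^sub>R u + Im h *\<^sub>R v)) h = Re h *\<^sub>R ?D u + Im h *\<^sub>R ?D v"
        using has_derivative_linear[OF fD] by (simp add: linear_add linear_scale)
      also have "\<dots> = Re h *\<^sub>R ?D u + Im h *\<^sub>R (\<i> * ?D u)"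
        by (simp only: Dv)
      also have "\<dots> = ?D u * (of_real (Re h) + \<i> * of_real (Im h))"
        by (simp add: scaleR_conv_of_real algebra_simps)
      also have "\<dots> = ?D u * h"
        by (simp add: complex_eq_iff)
      finally show "(?D \<circ> (\<lambda>h. Re h *\<^sub>R u + Im h *\<^sub>R v)) h = ?D u * h" .
    qed
    ultimately show ?thesis
      by (simp add: has_field_derivative_def o_def)
  qed
  then show ?thesis
    using field_differentiable_def field_differentiable_at_within holomorphic_on_def by blast
qed

lemma periodic_plane_constant:
  fixes f :: "'a::real_normed_vector \<Rightarrow> complex" and p u v :: 'a
  assumes "\<And>q. f differentiable (at q)"
    and "\<And>w. frechet_derivative f (at (p + Re w *\<^sub>R u + Im w *\<^sub>R v)) u
              + \<i> * frechet_derivative f (at (p + Re w *\<^sub>R u + Im w *\<^sub>R v)) v = 0"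
    and "Im (cnj \<omega>1 * \<omega>2) \<noteq> 0"
    and "\<And>(m1::int) (m2::int) w.
           f (p + Re (w + of_int m1 * \<omega>1 + of_int m2 * \<omega>2) *\<^sub>R u
                + Im (w + of_int m1 * \<omega>1 + of_int m2 * \<omega>2) *\<^sub>R v)
         = f (p + Re w *\<^sub>R u + Im w *\<^sub>R v)"
  shows "f (p + Re w *\<^sub>R u + Im w *\<^sub>R v) = f p"
  using entire_doubly_periodic_constant[OF holomorphic_on_plane, OF assms] by simp

section \<open>\<open>dbar\<close>-closed functions on \<open>\<Gamma>\<setminus>G\<close> are constant\<close>

lemma gmul_affine: "gmul g (s *\<^sub>R h) = g + s *\<^sub>R (gmul g h - g)"
  by (cases g; cases h) (simp add: gmul_def algebra_simps)

lemma vector_derivative_along_line: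
  assumes "f differentiable (at g)"
  shows "vector_derivative (\<lambda>s::real. f (g + s *\<^sub>R d)) (at 0) = frechet_derivative f (at g) d"
proof -
  let ?D = "frechet_derivative f (at g)"
  have fD: "(f has_derivative ?D) (at g)"
    using assms frechet_derivative_works by blast
  have line: "((\<lambda>s::real. g + s *\<^sub>R d) has_derivative (\<lambda>s. s *\<^sub>R d)) (at 0)"
    by (auto intro!: derivative_eq_intros)
  have "((f \<circ> (\<lambda>s::real. g + s *\<^sub>R d)) has_derivative (?D \<circ> (\<lambda>s. s *\<^sub>R d))) (at 0)"
    using diff_chain_at[OF line] fD by simp
  moreover have "?D \<circ> (\<lambda>s. s *\<^sub>R d) = (\<lambda>s. s *\<^sub>R ?D d)"
    using has_derivative_linear[OF fD] by (auto simp: linear_scale o_def)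
  ultimately have "((\<lambda>s. f (g + s *\<^sub>R d)) has_vector_derivative ?D d) (at 0)"
    by (simp add: has_vector_derivative_def o_def)
  then show ?thesis by (rule vector_derivative_at)
qed

lemma Efield_eq_frechet_derivative:
  assumes "f differentiable (at g)"
  shows "Efield k f g = frechet_derivative f (at g) (gmul g (uvec k) - g)"
  unfolding Efield_def gmul_affine using vector_derivative_along_line[OF assms] .

lemma Efield_directions:
  "gmul (t,x,y1,y2,z1,z2) (uvec 1) - (t,x,y1,y2,z1,z2) = (1,0,0,0,0,0)"
  "gmul (t,x,y1,y2,z1,z2) (uvec 2) - (t,x,y1,y2,z1,z2) = (0,1,0,0,0,0)"
  "gmul (t,x,y1,y2,z1,z2) (uvec 3) - (t,x,y1,y2,z1,z2) = (0,0,exp t,0,0,0)"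
  "gmul (t,x,y1,y2,z1,z2) (uvec 4) - (t,x,y1,y2,z1,z2) = (0,0,0,exp (-t),0,0)"
  "gmul (t,x,y1,y2,z1,z2) (uvec 5) - (t,x,y1,y2,z1,z2) = (0,0,x * exp t,0,exp t,0)"
  "gmul (t,x,y1,y2,z1,z2) (uvec 6) - (t,x,y1,y2,z1,z2) = (0,0,0,x * exp (-t),0,exp (-t))"
  by (simp_all add: gmul_def uvec_def zero_prod_def)

lemma Gamma_memI:
  "(a0 * of_int k, of_int l, of_int m1 * p11 + of_int m2 * p12, of_int m1 * p21 + of_int m2 * p22,
    of_int n1 * p11 + of_int n2 * p12, of_int n1 * p21 + of_int n2 * p22) \<in> Gamma a0 p11 p12 p21 p22"
  unfolding Gamma_def by blast

context
  fixes f :: "pt \<Rightarrow> complex" and a0 p11 p12 p21 p22 :: real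
  assumes diff: "\<And>q. f differentiable (at q)"
    and inv: "Gamma_inv (Gamma a0 p11 p12 p21 p22) f"
    and a0: "a0 > 0" and det: "p11 * p22 - p12 * p21 \<noteq> 0"
    and CR12: "\<And>g. Efield 1 f g + \<i> * Efield 2 f g = 0"
    and CR34: "\<And>g. Efield 3 f g + \<i> * Efield 4 f g = 0"
    and CR56: "\<And>g. Efield 5 f g + \<i> * Efield 6 f g = 0"
begin

lemma lattice_translation_invariant:
  "f (gmul (a0 * of_int k, of_int l, of_int m1 * p11 + of_int m2 * p12, of_int m1 * p21 + of_int m2 * p22,
      of_int n1 * p11 + of_int n2 * p12, of_int n1 * p21 + of_int n2 * p22) g) = f g"
  using inv Gamma_memI unfolding Gamma_inv_def by blast

lemma independent_of_y: "f (t,x,y1,y2,z1,z2) = f (t,x,0,0,z1,z2)"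
proof -
  define u :: pt where "u = (0,0,exp t,0,0,0)"
  define v :: pt where "v = (0,0,0,exp (-t),0,0)"
  define \<omega>1 where "\<omega>1 = Complex (p11 * exp (-t)) (p21 * exp t)"
  define \<omega>2 where "\<omega>2 = Complex (p12 * exp (-t)) (p22 * exp t)"
  have plane: "(t,x,0,0,z1,z2) + Re w *\<^sub>R u + Im w *\<^sub>R v = (t, x, Re w * exp t, Im w * exp (-t), z1, z2)" for w
    by (simp add: u_def v_def)
  have "f ((t,x,0,0,z1,z2) + Re w *\<^sub>R u + Im w *\<^sub>R v) = f (t,x,0,0,z1,z2)" for w
  proof (rule periodic_plane_constant[OF diff])
    show "frechet_derivative f (at ((t,x,0,0,z1,z2) + Re w *\<^sub>R u + Im w *\<^sub>R v)) u
        + \<i> * frechet_derivative f (at ((t,x,0,0,z1,z2) + Re w *\<^sub>R u + Im w *\<^sub>R v)) v = 0" for w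
      using CR34[of "(t, x, Re w * exp t, Im w * exp (-t), z1, z2)"] unfolding plane Efield_eq_frechet_derivative[OF diff] Efield_directions
      by (simp add: u_def v_def)
    show "Im (cnj \<omega>1 * \<omega>2) \<noteq> 0"
      using det by (simp add: \<omega>1_def \<omega>2_def exp_minus field_simps)
    show "f ((t,x,0,0,z1,z2) + Re (w + of_int m1 * \<omega>1 + of_int m2 * \<omega>2) *\<^sub>R u
            + Im (w + of_int m1 * \<omega>1 + of_int m2 * \<omega>2) *\<^sub>R v)
        = f ((t,x,0,0,z1,z2) + Re w *\<^sub>R u + Im w *\<^sub>R v)" for m1 m2 :: int and w
    proof -
      have "(t,x,0,0,z1,z2) + Re (w + of_int m1 * \<omega>1 + of_int m2 * \<omega>2) *\<^sub>R u
            + Im (w + of_int m1 * \<omega>1 + of_int m2 * \<omega>2) *\<^sub>R v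
          = gmul (0, 0, of_int m1 * p11 + of_int m2 * p12, of_int m1 * p21 + of_int m2 * p22, 0, 0)
              ((t,x,0,0,z1,z2) + Re w *\<^sub>R u + Im w *\<^sub>R v)"
        unfolding plane by (simp add: gmul_def \<omega>1_def \<omega>2_def exp_minus field_simps)
      then show ?thesis
        using lattice_translation_invariant[of 0 0 m1 m2 0 0] by simp
    qed
  qed
  from this[of "Complex (y1 * exp (-t)) (y2 * exp t)"] show ?thesis
    unfolding plane by (simp add: exp_minus mult.assoc)
qed

lemma independent_of_z: "f (t,x,0,0,z1,z2) = f (t,x,0,0,0,0)"
proof -
  define u :: pt where "u = (0,0,x * exp t,0,exp t,0)"
  define v :: pt where "v = (0,0,0,x * exp (-t),0,exp (-t))"
  define \<omega>1 where "\<omega>1 = Complex (p11 * exp (-t)) (p21 * exp t)"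
  define \<omega>2 where "\<omega>2 = Complex (p12 * exp (-t)) (p22 * exp t)"
  have plane: "(t,x,0,0,0,0) + Re w *\<^sub>R u + Im w *\<^sub>R v
      = (t, x, Re w * (x * exp t), Im w * (x * exp (-t)), Re w * exp t, Im w * exp (-t))" for w
    by (simp add: u_def v_def)
  have on_plane: "f ((t,x,0,0,0,0) + Re w *\<^sub>R u + Im w *\<^sub>R v) = f (t, x, 0, 0, Re w * exp t, Im w * exp (-t))"
    for w
    unfolding plane by (rule independent_of_y)
  have "f ((t,x,0,0,0,0) + Re w *\<^sub>R u + Im w *\<^sub>R v) = f (t,x,0,0,0,0)" for w
  proof (rule periodic_plane_constant[OF diff])
    show "frechet_derivative f (at ((t,x,0,0,0,0) + Re w *\<^sub>R u + Im w *\<^sub>R v)) u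
        + \<i> * frechet_derivative f (at ((t,x,0,0,0,0) + Re w *\<^sub>R u + Im w *\<^sub>R v)) v = 0" for w
      using CR56[of "(t, x, Re w * (x * exp t), Im w * (x * exp (-t)), Re w * exp t, Im w * exp (-t))"]
      unfolding plane Efield_eq_frechet_derivative[OF diff] Efield_directions
      by (simp add: u_def v_def)
    show "Im (cnj \<omega>1 * \<omega>2) \<noteq> 0"
      using det by (simp add: \<omega>1_def \<omega>2_def exp_minus field_simps)
    show "f ((t,x,0,0,0,0) + Re (w + of_int m1 * \<omega>1 + of_int m2 * \<omega>2) *\<^sub>R u
            + Im (w + of_int m1 * \<omega>1 + of_int m2 * \<omega>2) *\<^sub>R v)
        = f ((t,x,0,0,0,0) + Re w *\<^sub>R u + Im w *\<^sub>R v)" for m1 m2 :: int and w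
    proof -
      have "(t, x, 0, 0, Re (w + of_int m1 * \<omega>1 + of_int m2 * \<omega>2) * exp t,
                 Im (w + of_int m1 * \<omega>1 + of_int m2 * \<omega>2) * exp (-t))
          = gmul (0, 0, 0, 0, of_int m1 * p11 + of_int m2 * p12, of_int m1 * p21 + of_int m2 * p22)
              (t, x, 0, 0, Re w * exp t, Im w * exp (-t))"
        by (simp add: gmul_def \<omega>1_def \<omega>2_def exp_minus field_simps)
      then show ?thesis
        using lattice_translation_invariant[of 0 0 0 0 m1 m2] unfolding on_plane by simp
    qed
  qed
  from this[of "Complex (z1 * exp (-t)) (z2 * exp t)"] show ?thesis
    unfolding on_plane by (simp add: exp_minus mult.assoc)
qed

lemma independent_of_tx: "f (t,x,0,0,0,0) = f 0"
proof -
  define u :: pt where "u = (1,0,0,0,0,0)"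
  define v :: pt where "v = (0,1,0,0,0,0)"
  have plane: "0 + Re w *\<^sub>R u + Im w *\<^sub>R v = (Re w, Im w, 0, 0, 0, 0)" for w
    by (simp add: u_def v_def)
  have "f (0 + Re w *\<^sub>R u + Im w *\<^sub>R v) = f 0" for w
  proof (rule periodic_plane_constant[OF diff, of _ _ _ "of_real a0" \<i>])
    show "frechet_derivative f (at (0 + Re w *\<^sub>R u + Im w *\<^sub>R v)) u
        + \<i> * frechet_derivative f (at (0 + Re w *\<^sub>R u + Im w *\<^sub>R v)) v = 0" for w
      using CR12[of "(Re w, Im w, 0, 0, 0, 0)"]
      unfolding plane Efield_eq_frechet_derivative[OF diff] Efield_directions
      by (simp add: u_def v_def)
    show "Im (cnj (of_real a0) * \<i>) \<noteq> 0"
      using a0 by simp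
    show "f (0 + Re (w + of_int m1 * of_real a0 + of_int m2 * \<i>) *\<^sub>R u
            + Im (w + of_int m1 * of_real a0 + of_int m2 * \<i>) *\<^sub>R v)
        = f (0 + Re w *\<^sub>R u + Im w *\<^sub>R v)" for m1 m2 :: int and w
    proof -
      have "(Re (w + of_int m1 * of_real a0 + of_int m2 * \<i>), Im (w + of_int m1 * of_real a0 + of_int m2 * \<i>),
             0, 0, 0, 0)
          = gmul (a0 * of_int m1, of_int m2, 0, 0, 0, 0) (Re w, Im w, 0, 0, 0, 0)"
        by (simp add: gmul_def algebra_simps)
      then show ?thesis
        using lattice_translation_invariant[of m1 m2 0 0 0 0] unfolding plane by simp
    qed
  qed
  from this[of "Complex t x"] show ?thesis
    unfolding plane by simp
qed

lemma dbar_closed_function_constant: "f g = f 0"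
  using independent_of_y independent_of_z independent_of_tx
  by (cases g) (metis zero_prod_def)

end


lemma iterpd_const: "iterpd vs (\<lambda>x. k) = (\<lambda>x. if vs = [] then k else 0)"
proof (induction vs arbitrary: k)
  case Nil then show ?case by simp
next
  case (Cons v vs)
  have "pdiff v (\<lambda>x. c) = (\<lambda>x. 0)" for c :: complex
    unfolding pdiff_def using frechet_derivative_at[OF has_derivative_const] by metis
  then show ?case using Cons by (cases vs) auto
qed

lemma smoothfun_const: "smoothfun (\<lambda>x. k)"
  unfolding smoothfun_def iterpd_const by auto

lemma smoothfun_imp_differentiable: "smoothfun f \<Longrightarrow> f differentiable (at x)"
  unfolding smoothfun_def by (metis empty_subsetI iterpd.simps(1) list.set(1))

lemma fsc_Phi1_in_HDol_p0: "fsc c Phi1 \<in> HDol_p0 \<Gamma> 1"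
proof -
  have coeff: "fsc c Phi1 I = (\<lambda>x. if I = {0} then c else 0)" for I
    by (auto simp: fsc_def Phi1_def one_def)
  have A: "fsc c Phi1 \<in> Apq \<Gamma> 1 0"
    unfolding Apq_def coeff by (auto simp: bideg_def smoothfun_const Gamma_inv_def)
  have "dform (fsc c Phi1) K x = 0" for K x
    using dform_of_p0_form[OF A, of K x, unfolded subsets_012_card_1]
    by (simp add: coeff dfun_const structure_equations)
  then have "dbar 1 (fsc c Phi1) = fzero" "mubar 1 (fsc c Phi1) = fzero"
    by (auto simp: dbar_def mubar_def proj_def fzero_def fun_eq_iff)
  with A show ?thesis by (simp add: HDol_p0_def)
qed

lemma HDol_p0_1_eq:
  assumes "a0 > 0" and "p11 * p22 - p12 * p21 \<noteq> 0"
  shows "HDol_p0 (Gamma a0 p11 p12 p21 p22) 1 = range (\<lambda>c. fsc c Phi1)"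
proof (intro equalityI subsetI)
  fix a assume a: "a \<in> HDol_p0 (Gamma a0 p11 p12 p21 p22) 1"
  then have sm: "smoothfun (a {0})" and inv: "Gamma_inv (Gamma a0 p11 p12 p21 p22) (a {0})"
    by (auto simp: HDol_p0_def Apq_def)
  have const: "a {0} g = a {0} 0" for g
    by (rule dbar_closed_function_constant[OF smoothfun_imp_differentiable[OF sm] inv assms
          HDol_p0_1_equations(3-5)[OF a]])
  define c where "c = a {0} 0"
  have "a I x = fsc c Phi1 I x" for I x
  proof (cases "bideg 1 0 I")
    case True
    then have "I \<in> {I. I \<subseteq> {0,1,2::nat} \<and> card I = 1}" by (simp add: bideg_p0_iff)
    then have "I = {0} \<or> I = {1} \<or> I = {2}" unfolding subsets_012_card_1 by simp
    then show ?thesis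
      using const[of x] HDol_p0_1_equations(1,2)[OF a, of x] by (auto simp: Phi1_def c_def)
  next
    case False
    then have "I \<noteq> {0}" by (auto simp: bideg_def)
    with HDol_p0_coeff_eq_0[OF a False] show ?thesis by (simp add: Phi1_def)
  qed
  then have "a = fsc c Phi1" by (intro ext)
  then show "a \<in> range (\<lambda>c. fsc c Phi1)" by blast
qed (use fsc_Phi1_in_HDol_p0 in blast)

interpretation forms: vector_space fsc
  by unfold_locales (auto simp: fsc_def fun_eq_iff algebra_simps)

lemma dim_subset_fzero: "S \<subseteq> {fzero} \<Longrightarrow> forms.dim S = 0"
proof -
  assume "S \<subseteq> {fzero}"
  then have "forms.span S \<subseteq> forms.span {0}"
    by (intro forms.span_mono) (simp add: fzero_def zero_fun_def)
  then have "forms.span S = forms.span {}"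
    using forms.span_insert_0[of "{}"] forms.span_mono[of "{}" S] by auto
  then have "forms.dim S = forms.dim {}" by (rule forms.span_eq_dim)
  then show ?thesis by (simp add: forms.dim_eq_card_independent forms.independent_empty)
qed

lemma dim_range_fsc_Phi1: "forms.dim (range (\<lambda>c. fsc c Phi1)) = 1"
proof -
  have "Phi1 \<noteq> 0"
    by (metis Phi1_def one_apply zero_fun_def zero_neq_one)
  moreover have "range (\<lambda>c. fsc c Phi1) = forms.span {Phi1}"
    by (simp add: forms.span_singleton)
  ultimately show ?thesis
    using forms.dim_eq_card_independent[of "{Phi1}"] by simp
qed

theorem mainTheorem8:
  fixes b11 b12 b21 b22 :: int and p11 p12 p21 p22 a0 :: real
  assumes "b11 * b22 - b12 * b21 = 1"
    and "a0 > 0"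
    and "p11 * p22 - p12 * p21 \<noteq> 0"
    and "p11 * of_int b11 + p12 * of_int b21 = exp a0 * p11"
    and "p11 * of_int b12 + p12 * of_int b22 = exp a0 * p12"
    and "p21 * of_int b11 + p22 * of_int b21 = exp (- a0) * p21"
    and "p21 * of_int b12 + p22 * of_int b22 = exp (- a0) * p22"
  shows "hDol_p0 (Gamma a0 p11 p12 p21 p22) 1 = 1
       \<and> HDol_p0 (Gamma a0 p11 p12 p21 p22) 1 = range (\<lambda>c. fsc c Phi1)
       \<and> hDol_p0 (Gamma a0 p11 p12 p21 p22) 2 = 0
       \<and> hDol_p0 (Gamma a0 p11 p12 p21 p22) 3 = 0"
  \<comment> \<open>The conditions on \<open>B\<close> only make \<open>\<Gamma>\<close> a subgroup; the argument uses just a0 > 0,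
    \<open>det P \<noteq> 0\<close> and invariance under the translations in \<open>\<Gamma>\<close>.\<close>
  using HDol_p0_1_eq[OF assms(2,3)] dim_range_fsc_Phi1
    dim_subset_fzero[OF HDol_p0_2_trivial] dim_subset_fzero[OF HDol_p0_3_trivial]
  unfolding hDol_p0_def by simp

end
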